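(* Let $\mathcal{H}=(V,E)$ be a hypergraph with $\emptyset\notin E$. Then $\mathcal{H}$ is threshold if and only if its split-incidence graph is connected-domishold.
   Context: A hypergraph $\mathcal{H}=(V,E)$ consists of a finite set $V$ and a set $E$ of subsets of $V$ (hyperedges). It is threshold if there exist $w:V\to\mathbb{R}_{\ge0}$ and $t\in\mathbb{R}_{\ge0}$ such that for all $X\subseteq V$, $\sum_{x\in X}w(x)\le t$ iff $X$ contains no hyperedge. The split-incidence graph of $\mathcal{H}$ is the graph with vertex set $V\cup E$ in which $V$ is a clique, $E$ is an independent set, and $v\in V$ is adjacent to $e\in E$ iff $v\in e$. A connected dominating set of a connected graph $G$ is a set $S\subseteq V(G)$ such that every vertex not in $S$ has a neighbor in $S$ and $G[S]$ is connected; $G$ is connected-domishold if there exist $w:V(G)\to\mathbb{R}_{\ge0}$, $t\in\mathbb{R}_{\ge0}$ such that for all $S\subseteq V(G)$, $\sum_{x\in S}w(x)\ge t$ iff $S$ is a connected dominating set. *)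

theory Defs
  imports Complex_Main
begin

definition hypergraph :: "'a set \<Rightarrow> 'a set set \<Rightarrow> bool" where
  "hypergraph V E \<longleftrightarrow> finite V \<and> (\<forall>e\<in>E. e \<subseteq> V)"

definition threshold_hypergraph :: "'a set \<Rightarrow> 'a set set \<Rightarrow> bool" where
  "threshold_hypergraph V E \<longleftrightarrow>
     (\<exists>(w :: 'a \<Rightarrow> real) (t :: real). (\<forall>x\<in>V. 0 \<le> w x) \<and> 0 \<le> t \<and>
        (\<forall>X. X \<subseteq> V \<longrightarrow> ((\<Sum>x\<in>X. w x) \<le> t \<longleftrightarrow> \<not> (\<exists>e\<in>E. e \<subseteq> X))))"

definition si_vertices :: "'a set \<Rightarrow> 'a set set \<Rightarrow> ('a + 'a set) set" where
  "si_vertices V E = Inl ` V \<union> Inr ` E"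

fun si_adj :: "('a + 'a set) \<Rightarrow> ('a + 'a set) \<Rightarrow> bool" where
  "si_adj (Inl u) (Inl v) = (u \<noteq> v)"
| "si_adj (Inl v) (Inr e) = (v \<in> e)"
| "si_adj (Inr e) (Inl v) = (v \<in> e)"
| "si_adj (Inr e) (Inr f) = False"

definition induced_connected :: "('v \<Rightarrow> 'v \<Rightarrow> bool) \<Rightarrow> 'v set \<Rightarrow> bool" where
  "induced_connected adj S \<longleftrightarrow>
     (\<forall>x\<in>S. \<forall>y\<in>S. (x, y) \<in> {(a, b). a \<in> S \<and> b \<in> S \<and> adj a b}\<^sup>*)"

definition connected_graph :: "'v set \<Rightarrow> ('v \<Rightarrow> 'v \<Rightarrow> bool) \<Rightarrow> bool" where
  "connected_graph VG adj \<longleftrightarrow> induced_connected adj VG"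

definition dominating_set :: "'v set \<Rightarrow> ('v \<Rightarrow> 'v \<Rightarrow> bool) \<Rightarrow> 'v set \<Rightarrow> bool" where
  "dominating_set VG adj S \<longleftrightarrow> S \<subseteq> VG \<and> (\<forall>v\<in>VG - S. \<exists>u\<in>S. adj v u)"

definition connected_dominating_set :: "'v set \<Rightarrow> ('v \<Rightarrow> 'v \<Rightarrow> bool) \<Rightarrow> 'v set \<Rightarrow> bool" where
  "connected_dominating_set VG adj S \<longleftrightarrow> dominating_set VG adj S \<and> induced_connected adj S"

definition connected_domishold :: "'v set \<Rightarrow> ('v \<Rightarrow> 'v \<Rightarrow> bool) \<Rightarrow> bool" where
  "connected_domishold VG adj \<longleftrightarrow> connected_graph VG adj \<and>
     (\<exists>(w :: 'v \<Rightarrow> real) (t :: real). (\<forall>x\<in>VG. 0 \<le> w x) \<and> 0 \<le> t \<and>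
        (\<forall>S. S \<subseteq> VG \<longrightarrow> ((\<Sum>x\<in>S. w x) \<ge> t \<longleftrightarrow> connected_dominating_set VG adj S)))"

end

theory Submission
  imports Defs
begin

text \<open>Apart from the degenerate cases \<open>E = {}\<close> and \<open>E = {V}\<close>, a set of vertices of the
  split-incidence graph is a connected dominating set iff its part in \<open>V\<close> is a transversal
  of \<open>E\<close>: a hyperedge vertex has neighbours only in \<open>V\<close>, and the clique on \<open>V\<close> makes
  everything connected. Putting weight \<open>0\<close> on the hyperedge vertices, connected-domishold
  weights therefore amount to a threshold description of the transversals, which under
  \<open>X \<mapsto> V - X\<close> is a threshold description of the sets containing no hyperedge.\<close>

definition transversal :: "'a set set \<Rightarrow> 'a set \<Rightarrow> bool" where
  "transversal E T \<longleftrightarrow> (\<forall>e\<in>E. e \<inter> T \<noteq> {})"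

definition transversal_threshold :: "'a set \<Rightarrow> 'a set set \<Rightarrow> bool" where
  "transversal_threshold V E \<longleftrightarrow>
     (\<exists>(w :: 'a \<Rightarrow> real) (t :: real). (\<forall>x\<in>V. 0 \<le> w x) \<and> 0 \<le> t \<and>
        (\<forall>T. T \<subseteq> V \<longrightarrow> (t \<le> (\<Sum>x\<in>T. w x) \<longleftrightarrow> transversal E T)))"

lemma contains_edge_iff_not_transversal_compl:
  assumes "hypergraph V E" and "X \<subseteq> V"
  shows "(\<exists>e\<in>E. e \<subseteq> X) \<longleftrightarrow> \<not> transversal E (V - X)"
proof -
  have "e \<subseteq> X \<longleftrightarrow> e \<inter> (V - X) = {}" if "e \<in> E" for e
    using that assms unfolding hypergraph_def by blast
  then show ?thesis
    unfolding transversal_def by blast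
qed

lemma threshold_iff_transversal_threshold:
  assumes hyp: "hypergraph V E" and "{} \<notin> E" and "E \<noteq> {}"
  shows "threshold_hypergraph V E \<longleftrightarrow> transversal_threshold V E"
proof -
  have "finite V" using hyp unfolding hypergraph_def by blast
  have compl_sum: "(\<Sum>x\<in>V - X. w x) = (\<Sum>x\<in>V. w x) - (\<Sum>x\<in>X. w x)"
    if "X \<subseteq> V" for X and w :: "'a \<Rightarrow> real"
    using \<open>finite V\<close> that by (rule sum_diff)
  show ?thesis
  proof
    assume "threshold_hypergraph V E"
    then obtain w t where w: "\<forall>x\<in>V. 0 \<le> (w x :: real)"
      and thr: "\<And>X. X \<subseteq> V \<Longrightarrow> (\<Sum>x\<in>X. w x) \<le> t \<longleftrightarrow> \<not> (\<exists>e\<in>E. e \<subseteq> X)"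
      unfolding threshold_hypergraph_def by blast
    define t' where "t' = (\<Sum>x\<in>V. w x) - t"
    have "\<exists>e\<in>E. e \<subseteq> V"
      using hyp \<open>E \<noteq> {}\<close> unfolding hypergraph_def by blast
    then have "0 \<le> t'"
      using thr[of V] unfolding t'_def by simp
    moreover have "t' \<le> (\<Sum>x\<in>T. w x) \<longleftrightarrow> transversal E T" if "T \<subseteq> V" for T
    proof -
      have "t' \<le> (\<Sum>x\<in>T. w x) \<longleftrightarrow> (\<Sum>x\<in>V - T. w x) \<le> t"
        using compl_sum[OF that, of w] unfolding t'_def by linarith
      also have "\<dots> \<longleftrightarrow> transversal E (V - (V - T))"
        using thr[of "V - T"] contains_edge_iff_not_transversal_compl[OF hyp, of "V - T"] by blast
      finally show ?thesis
        using that by (simp add: double_diff)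
    qed
    ultimately show "transversal_threshold V E"
      unfolding transversal_threshold_def using w
      by (intro exI[of _ w] exI[of _ t'] conjI allI impI) blast+
  next
    assume "transversal_threshold V E"
    then obtain w t' where w: "\<forall>x\<in>V. 0 \<le> (w x :: real)"
      and thr: "\<And>T. T \<subseteq> V \<Longrightarrow> t' \<le> (\<Sum>x\<in>T. w x) \<longleftrightarrow> transversal E T"
      unfolding transversal_threshold_def by blast
    define t where "t = (\<Sum>x\<in>V. w x) - t'"
    have "transversal E V"
      unfolding transversal_def
    proof
      fix e assume "e \<in> E"
      with hyp \<open>{} \<notin> E\<close> have "e \<subseteq> V" "e \<noteq> {}"
        unfolding hypergraph_def by auto
      then show "e \<inter> V \<noteq> {}"
        by (simp add: Int_absorb2)
    qed
    then have "0 \<le> t"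
      using thr[of V] unfolding t_def by simp
    moreover have "(\<Sum>x\<in>X. w x) \<le> t \<longleftrightarrow> \<not> (\<exists>e\<in>E. e \<subseteq> X)" if "X \<subseteq> V" for X
    proof -
      have "(\<Sum>x\<in>X. w x) \<le> t \<longleftrightarrow> t' \<le> (\<Sum>x\<in>V - X. w x)"
        using compl_sum[OF that, of w] unfolding t_def by linarith
      then show ?thesis
        using thr[of "V - X"] contains_edge_iff_not_transversal_compl[OF hyp that] by blast
    qed
    ultimately show "threshold_hypergraph V E"
      unfolding threshold_hypergraph_def using w
      by (intro exI[of _ w] exI[of _ t] conjI allI impI) blast+
  qed
qed

lemma induced_connected_if_near_clique:
  assumes clique: "\<And>x y. x \<in> K \<Longrightarrow> y \<in> K \<Longrightarrow> x \<noteq> y \<Longrightarrow> adj x y"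
    and "K \<subseteq> S"
    and near: "\<And>x. x \<in> S \<Longrightarrow> \<exists>k\<in>K. x = k \<or> adj x k \<and> adj k x"
  shows "induced_connected adj S"
proof -
  let ?R = "{(a, b). a \<in> S \<and> b \<in> S \<and> adj a b}"
  have edge: "(a, b) \<in> ?R\<^sup>*" if "a \<in> S" "b \<in> S" "adj a b" for a b
    using that by (intro r_into_rtrancl) simp
  have to_clique: "\<exists>k\<in>K. (x, k) \<in> ?R\<^sup>* \<and> (k, x) \<in> ?R\<^sup>*" if x: "x \<in> S" for x
  proof -
    obtain k where k: "k \<in> K" "x = k \<or> adj x k \<and> adj k x"
      using near[OF x] by blast
    with x \<open>K \<subseteq> S\<close> edge[of x k] edge[of k x] show ?thesis by auto
  qed
  have within_clique: "(k, k') \<in> ?R\<^sup>*" if "k \<in> K" "k' \<in> K" for k k'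
  proof (cases "k = k'")
    case False
    with that \<open>K \<subseteq> S\<close> show ?thesis by (intro edge clique) auto
  qed simp
  show ?thesis
    unfolding induced_connected_def
  proof (intro ballI)
    fix x y assume "x \<in> S" "y \<in> S"
    obtain k where k: "k \<in> K" "(x, k) \<in> ?R\<^sup>*"
      using to_clique[OF \<open>x \<in> S\<close>] by blast
    obtain k' where k': "k' \<in> K" "(k', y) \<in> ?R\<^sup>*"
      using to_clique[OF \<open>y \<in> S\<close>] by blast
    have "(x, k') \<in> ?R\<^sup>*"
      using k(2) within_clique[OF k(1) k'(1)] by (rule rtrancl_trans)
    then show "(x, y) \<in> ?R\<^sup>*"
      using k'(2) by (rule rtrancl_trans)
  qed
qed

lemma finite_si_vertices: "hypergraph V E \<Longrightarrow> finite (si_vertices V E)"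
  unfolding hypergraph_def si_vertices_def
  by (metis Pow_iff finite_Pow_iff finite_UnI finite_imageI finite_subset subsetI)

lemma connected_graph_si:
  assumes "hypergraph V E" and "{} \<notin> E"
  shows "connected_graph (si_vertices V E) si_adj"
  unfolding connected_graph_def
proof (rule induced_connected_if_near_clique[where K = "Inl ` V"])
  fix x y :: "'a + 'a set"
  assume "x \<in> Inl ` V" "y \<in> Inl ` V" "x \<noteq> y"
  then obtain a b where "x = Inl a" "y = Inl b" "a \<noteq> b" by blast
  then show "si_adj x y" by simp
next
  show "Inl ` V \<subseteq> si_vertices V E"
    unfolding si_vertices_def by blast
next
  fix x assume x: "x \<in> si_vertices V E"
  show "\<exists>k\<in>Inl ` V. x = k \<or> si_adj x k \<and> si_adj k x"
  proof (cases x)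
    case (Inl v)
    with x have "v \<in> V"
      unfolding si_vertices_def by blast
    with Inl show ?thesis by (intro bexI[of _ x]) simp_all
  next
    case (Inr e)
    with x have "e \<in> E"
      unfolding si_vertices_def by blast
    with assms(2) obtain v where "v \<in> e"
      by (metis all_not_in_conv)
    with \<open>e \<in> E\<close> assms(1) have "v \<in> V"
      unfolding hypergraph_def by blast
    with Inr \<open>v \<in> e\<close> show ?thesis by (intro bexI[of _ "Inl v"]) auto
  qed
qed

lemma cds_si_if_transversal:
  assumes S: "S \<subseteq> si_vertices V E" and a: "Inl a \<in> S" and tr: "transversal E (Inl -` S)"
  shows "connected_dominating_set (si_vertices V E) si_adj S"
proof -
  have hit: "\<exists>v\<in>e. Inl v \<in> S" if "e \<in> E" for e
    using tr that unfolding transversal_def by blast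
  have edge_in_E: "e \<in> E" if "Inr e \<in> si_vertices V E" for e
    using that unfolding si_vertices_def by blast
  have "dominating_set (si_vertices V E) si_adj S"
    unfolding dominating_set_def
  proof (intro conjI ballI S)
    fix x assume x: "x \<in> si_vertices V E - S"
    show "\<exists>u\<in>S. si_adj x u"
    proof (cases x)
      case (Inl v)
      with x a show ?thesis by (intro bexI[of _ "Inl a"]) auto
    next
      case (Inr e)
      with x obtain v where "v \<in> e" "Inl v \<in> S"
        using hit edge_in_E by blast
      with Inr show ?thesis by (intro bexI[of _ "Inl v"]) auto
    qed
  qed
  moreover have "induced_connected si_adj S"
  proof (rule induced_connected_if_near_clique[where K = "S \<inter> range Inl"])
    fix x assume x: "x \<in> S"
    show "\<exists>k\<in>S \<inter> range Inl. x = k \<or> si_adj x k \<and> si_adj k x"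
    proof (cases x)
      case (Inr e)
      with x S obtain v where "v \<in> e" "Inl v \<in> S"
        using hit edge_in_E by blast
      with Inr show ?thesis by (intro bexI[of _ "Inl v"]) auto
    qed (use x in auto)
  qed auto
  ultimately show ?thesis unfolding connected_dominating_set_def by blast
qed

lemma transversal_if_cds_si:
  assumes hyp: "hypergraph V E" and not_single: "E \<noteq> {V}"
    and cds: "connected_dominating_set (si_vertices V E) si_adj S"
  shows "transversal E (Inl -` S)"
proof (rule ccontr)
  assume "\<not> ?thesis"
  then obtain e where e: "e \<in> E" and unhit: "\<And>v. v \<in> e \<Longrightarrow> Inl v \<notin> S"
    unfolding transversal_def by auto
  let ?R = "{(a, b). a \<in> S \<and> b \<in> S \<and> si_adj a b}"
  have dom: "\<And>x. x \<in> si_vertices V E - S \<Longrightarrow> \<exists>u\<in>S. si_adj x u"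
    and conn: "\<And>x y. x \<in> S \<Longrightarrow> y \<in> S \<Longrightarrow> (x, y) \<in> ?R\<^sup>*"
    using cds unfolding connected_dominating_set_def dominating_set_def induced_connected_def
    by blast+
  have no_nbr: "\<not> si_adj (Inr e) u" if "u \<in> S" for u
    using unhit that by (cases u) auto
  have in_S: "Inr e \<in> S"
  proof (rule ccontr)
    assume "Inr e \<notin> S"
    with e have "Inr e \<in> si_vertices V E - S"
      unfolding si_vertices_def by blast
    with dom no_nbr show False by blast
  qed
  show False
  proof (cases "S = {Inr e}")
    case True
    \<comment> \<open>a lone hyperedge vertex dominates only if it is the only one and contains all of \<open>V\<close>\<close>
    have "E \<subseteq> {e}"
    proof
      fix e' assume "e' \<in> E"
      show "e' \<in> {e}"
      proof (rule ccontr)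
        assume "e' \<notin> {e}"
        with \<open>e' \<in> E\<close> True have "Inr e' \<in> si_vertices V E - S"
          unfolding si_vertices_def by auto
        with dom obtain u where "u \<in> S" "si_adj (Inr e') u" by blast
        with True show False by simp
      qed
    qed
    moreover have "e = V"
    proof
      show "e \<subseteq> V" using hyp e unfolding hypergraph_def by blast
      show "V \<subseteq> e"
      proof
        fix v assume "v \<in> V"
        with True have "Inl v \<in> si_vertices V E - S"
          unfolding si_vertices_def by auto
        with dom obtain u where "u \<in> S" "si_adj (Inl v) u" by blast
        with True show "v \<in> e" by simp
      qed
    qed
    ultimately have "E = {V}" using e by blast
    with not_single show False ..
  next
    case False
    then obtain y where "y \<in> S" "y \<noteq> Inr e" using in_S by blast
    from conn[OF in_S \<open>y \<in> S\<close>] \<open>y \<noteq> Inr e\<close> obtain z where "(Inr e, z) \<in> ?R"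
      by (cases rule: converse_rtranclE) auto
    then show False using no_nbr by blast
  qed
qed

lemma cds_si_iff_transversal:
  assumes "hypergraph V E" and "E \<noteq> {}" and "E \<noteq> {V}" and S: "S \<subseteq> si_vertices V E"
  shows "connected_dominating_set (si_vertices V E) si_adj S \<longleftrightarrow> transversal E (Inl -` S)"
proof
  assume tr: "transversal E (Inl -` S)"
  then obtain a where "Inl a \<in> S"
    using \<open>E \<noteq> {}\<close> unfolding transversal_def by blast
  with tr show "connected_dominating_set (si_vertices V E) si_adj S"
    using cds_si_if_transversal[OF S] by blast
qed (rule transversal_if_cds_si[OF assms(1,3)])

lemma cds_si_iff_nonempty:
  assumes "E \<subseteq> {V}" and "V \<noteq> {}" and S: "S \<subseteq> si_vertices V E"
  shows "connected_dominating_set (si_vertices V E) si_adj S \<longleftrightarrow> S \<noteq> {}"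
proof
  assume "connected_dominating_set (si_vertices V E) si_adj S"
  then show "S \<noteq> {}"
    using \<open>V \<noteq> {}\<close> unfolding connected_dominating_set_def dominating_set_def si_vertices_def by blast
next
  assume "S \<noteq> {}"
  show "connected_dominating_set (si_vertices V E) si_adj S"
  proof (cases "S \<inter> range Inl = {}")
    case False
    then obtain a where a: "Inl a \<in> S" by blast
    then have "transversal E (Inl -` S)"
      using S \<open>E \<subseteq> {V}\<close> unfolding transversal_def si_vertices_def by blast
    with a show ?thesis using cds_si_if_transversal[OF S] by blast
  next
    case True
    with S \<open>S \<noteq> {}\<close> \<open>E \<subseteq> {V}\<close> have "S = {Inr V}" "E = {V}"
      unfolding si_vertices_def by blast+
    then show ?thesis
      unfolding connected_dominating_set_def dominating_set_def induced_connected_def si_vertices_def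
      by auto
  qed
qed

lemma sum_case_sum_Inl:
  fixes w :: "'a \<Rightarrow> 'b :: comm_monoid_add" and S :: "('a + 'c) set"
  assumes "finite S"
  shows "(\<Sum>x\<in>S. case_sum w (\<lambda>_. 0) x) = (\<Sum>v\<in>Inl -` S. w v)"
proof -
  have "(\<Sum>x\<in>S. case_sum w (\<lambda>_. 0) x) = (\<Sum>x\<in>(Inl ` Inl -` S :: ('a + 'c) set). case_sum w (\<lambda>_. 0) x)"
    by (rule sum.mono_neutral_right) (auto simp: assms split: sum.split)
  also have "\<dots> = (\<Sum>v\<in>Inl -` S. w v)"
    by (subst sum.reindex) (auto simp: inj_on_def)
  finally show ?thesis .
qed

lemma connected_domishold_si_iff_transversal_threshold:
  assumes hyp: "hypergraph V E" and "{} \<notin> E" and "E \<noteq> {}" and "E \<noteq> {V}"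
  shows "connected_domishold (si_vertices V E) si_adj \<longleftrightarrow> transversal_threshold V E"
proof
  assume "connected_domishold (si_vertices V E) si_adj"
  then obtain w t where w: "\<forall>x\<in>si_vertices V E. 0 \<le> (w x :: real)" and "0 \<le> t"
    and thr: "\<And>S. S \<subseteq> si_vertices V E \<Longrightarrow>
                t \<le> (\<Sum>x\<in>S. w x) \<longleftrightarrow> connected_dominating_set (si_vertices V E) si_adj S"
    unfolding connected_domishold_def by blast
  have "t \<le> (\<Sum>v\<in>T. w (Inl v)) \<longleftrightarrow> transversal E T" if "T \<subseteq> V" for T
  proof -
    have T: "Inl ` T \<subseteq> si_vertices V E"
      using that unfolding si_vertices_def by blast
    have "(\<Sum>v\<in>T. w (Inl v)) = (\<Sum>x\<in>Inl ` T. w x)"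
      by (simp add: sum.reindex)
    then show ?thesis
      using thr[OF T] cds_si_iff_transversal[OF assms(1,3,4) T] by (simp add: inj_vimage_image_eq)
  qed
  moreover have "\<forall>v\<in>V. 0 \<le> w (Inl v)"
    using w unfolding si_vertices_def by blast
  ultimately show "transversal_threshold V E"
    unfolding transversal_threshold_def using \<open>0 \<le> t\<close>
    by (intro exI[of _ "\<lambda>v. w (Inl v)"] exI[of _ t] conjI allI impI) blast+
next
  assume "transversal_threshold V E"
  then obtain w t where w: "\<forall>x\<in>V. 0 \<le> (w x :: real)" and "0 \<le> t"
    and thr: "\<And>T. T \<subseteq> V \<Longrightarrow> t \<le> (\<Sum>x\<in>T. w x) \<longleftrightarrow> transversal E T"
    unfolding transversal_threshold_def by blast
  have "t \<le> (\<Sum>x\<in>S. case_sum w (\<lambda>_. 0) x) \<longleftrightarrow> connected_dominating_set (si_vertices V E) si_adj S"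
    if S: "S \<subseteq> si_vertices V E" for S
  proof -
    have "finite S"
      using S finite_si_vertices[OF hyp] finite_subset by blast
    moreover have "Inl -` S \<subseteq> V"
      using S unfolding si_vertices_def by auto
    ultimately show ?thesis
      using thr cds_si_iff_transversal[OF assms(1,3,4) S] by (simp add: sum_case_sum_Inl)
  qed
  moreover have "\<forall>x\<in>si_vertices V E. 0 \<le> case_sum w (\<lambda>_. 0) x"
    using w unfolding si_vertices_def by auto
  ultimately show "connected_domishold (si_vertices V E) si_adj"
    unfolding connected_domishold_def using connected_graph_si[OF hyp \<open>{} \<notin> E\<close>] \<open>0 \<le> t\<close>
    by (intro exI[of _ "case_sum w (\<lambda>_. 0)"] exI[of _ t] conjI allI impI) blast+
qed

lemma connected_domishold_si_if_subset_singleton: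
  assumes hyp: "hypergraph V E" and "{} \<notin> E" and "E \<subseteq> {V}"
  shows "connected_domishold (si_vertices V E) si_adj"
proof (cases "V = {}")
  case True
  with assms have "si_vertices V E = {}"
    unfolding si_vertices_def by auto
  then show ?thesis
    unfolding connected_domishold_def using connected_graph_si[OF hyp \<open>{} \<notin> E\<close>]
    by (intro conjI exI[of _ "\<lambda>_. 0"] exI[of _ 0])
      (auto simp: connected_dominating_set_def dominating_set_def induced_connected_def)
next
  case False
  have "1 \<le> (\<Sum>x\<in>S. 1 :: real) \<longleftrightarrow> connected_dominating_set (si_vertices V E) si_adj S"
    if S: "S \<subseteq> si_vertices V E" for S
  proof -
    have "finite S"
      using S finite_si_vertices[OF hyp] finite_subset by blast
    then show ?thesis
      using cds_si_iff_nonempty[OF \<open>E \<subseteq> {V}\<close> False S] by (simp add: Suc_le_eq card_gt_0_iff)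
  qed
  then show ?thesis
    unfolding connected_domishold_def using connected_graph_si[OF hyp \<open>{} \<notin> E\<close>]
    by (intro conjI exI[of _ "\<lambda>_. 1"] exI[of _ 1]) auto
qed

lemma threshold_hypergraph_if_subset_singleton:
  assumes hyp: "hypergraph V E" and "{} \<notin> E" and "E \<subseteq> {V}"
  shows "threshold_hypergraph V E"
proof (cases "E = {}")
  case True
  then show ?thesis
    unfolding threshold_hypergraph_def by (intro exI[of _ "\<lambda>_. 0"] exI[of _ 0]) auto
next
  case False
  then have E: "E = {V}" using \<open>E \<subseteq> {V}\<close> by blast
  have "1 \<le> (\<Sum>x\<in>T. 1 :: real) \<longleftrightarrow> transversal E T" if "T \<subseteq> V" for T
  proof -
    have "finite T"
      using that hyp finite_subset unfolding hypergraph_def by blast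
    then show ?thesis
      using that E by (auto simp: transversal_def Suc_le_eq card_gt_0_iff Int_absorb1)
  qed
  then have "transversal_threshold V E"
    unfolding transversal_threshold_def by (intro exI[of _ "\<lambda>_. 1"] exI[of _ 1]) auto
  then show ?thesis
    using threshold_iff_transversal_threshold[OF hyp \<open>{} \<notin> E\<close> False] by blast
qed

theorem mainTheorem6:
  fixes V :: "'a set" and E :: "'a set set"
  assumes "hypergraph V E" and "{} \<notin> E"
  shows "threshold_hypergraph V E \<longleftrightarrow> connected_domishold (si_vertices V E) si_adj"
proof (cases "E \<subseteq> {V}")
  case True
  then show ?thesis
    using threshold_hypergraph_if_subset_singleton connected_domishold_si_if_subset_singleton assms
    by blast
next
  case False
  then have "E \<noteq> {}" and "E \<noteq> {V}" by auto
  have "threshold_hypergraph V E \<longleftrightarrow> transversal_threshold V E"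
    using threshold_iff_transversal_threshold[OF assms \<open>E \<noteq> {}\<close>] .
  also have "\<dots> \<longleftrightarrow> connected_domishold (si_vertices V E) si_adj"
    using connected_domishold_si_iff_transversal_threshold[OF assms \<open>E \<noteq> {}\<close> \<open>E \<noteq> {V}\<close>] by simp
  finally show ?thesis .
qed

end
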